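(* Let $mG^{(0)}$ be a finite canonical misinformation game and $\mathcal{T}$ the terminal set of the Adaptation Procedure on $mG^{(0)}$. Then: (i) $\mathcal{T}\subseteq\mathcal{AD}^\infty(\{mG^{(0)}\})$; (ii) for any $\sigma\in SME(mG^{(0)})$ there exists $mG\in\mathcal{T}$ such that $\sigma\in NME(mG)$.
   Context: A normal-form game is $G=\langle N,S,P\rangle$ with finite players $N$, finite pure strategy sets $S_i$, positions $S=\times_i S_i$, payoffs $P_i:S\to\mathbb{R}$. A misinformation game $mG=\langle G^0,G^1,\dots,G^{|N|}\rangle$ consists of the actual game $G^0$ and subjective games $G^i$; it is canonical if all $G^i=\langle N,S,P^i\rangle$ differ from $G^0$ only in payoffs and in every $G^i$ all players have equally many pure strategies. $NME(mG)$ is the set of profiles $\sigma=(\sigma_1,\dots,\sigma_{|N|})$ such that each $\sigma_i$ is player $i$'s component of some Nash equilibrium of $G^i$. $\chi(\sigma)=\mathrm{supp}(\sigma_1)\times\dots\times\mathrm{supp}(\sigma_{|N|})$. For $\vec v\in S$, $mG_{\vec v}$ is obtained by replacing, in every $P^i$ ($i\ge1$), the payoff vector at position $\vec v$ by $P^0(\vec v)$. For a set $M$ of misinformation games, $\mathcal{AD}(M)=\{mG_{\vec u}: mG\in M,\sigma\in NME(mG),\vec u\in\chi(\sigma)\}$, $\mathcal{AD}^{(0)}(M)=M$, $\mathcal{AD}^{(t+1)}(M)=\mathcal{AD}^{(t)}(\mathcal{AD}(M))$, $\mathcal{AD}^*(M)=\bigcup_{t\ge0}\mathcal{AD}^{(t)}(M)$;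 the length $\mathfrak{L}$ is the least $t\ge0$ with $\mathcal{AD}^{(t+1)}(M)=\mathcal{AD}^{(t)}(M)$ and $\mathcal{AD}^\infty(M)=\mathcal{AD}^{(\mathfrak{L})}(M)$. The terminal set is $\mathcal{T}=\{mG\in\mathcal{AD}^*(\{mG^{(0)}\}): mG\in\mathcal{AD}(\{mG\})\}$. A profile $\sigma$ is a stable misinformed equilibrium of $mG^{(0)}$ if there is $\widehat{mG}\in\mathcal{AD}^\infty(\{mG^{(0)}\})$ with $\sigma\in NME(\widehat{mG})$ and $\widehat{mG}_{\vec v}=\widehat{mG}$ for all $\vec v\in\chi(\sigma)$; $SME(mG^{(0)})$ is the set of these. *)

theory Defs
  imports "HOL-Analysis.Analysis"
begin

(* A canonical misinformation game with shared N and S is represented by its payoff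
   functions  mg :: nat => (nat => nat) => nat => real :  mg g s i  is the payoff of
   player i at position s in game G^g  (g = 0: actual game, g = i in 1..n: subjective
   game of player i). *)

type_synonym game = "(nat \<Rightarrow> nat) \<Rightarrow> nat \<Rightarrow> real"
type_synonym mgame = "nat \<Rightarrow> game"
type_synonym profile = "nat \<Rightarrow> nat \<Rightarrow> real"

definition positions :: "nat \<Rightarrow> (nat \<Rightarrow> nat) \<Rightarrow> (nat \<Rightarrow> nat) set" where
  "positions n ms = PiE {1..n} (\<lambda>i. {0..<ms i})"

definition mixed_strategy :: "(nat \<Rightarrow> nat) \<Rightarrow> nat \<Rightarrow> (nat \<Rightarrow> real) \<Rightarrow> bool" where
  "mixed_strategy ms i p \<longleftrightarrow> (\<forall>a. 0 \<le> p a) \<and> (\<forall>a. ms i \<le> a \<longrightarrow> p a = 0)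
      \<and> (\<Sum>a<ms i. p a) = 1"

definition mixed_profile :: "nat \<Rightarrow> (nat \<Rightarrow> nat) \<Rightarrow> profile \<Rightarrow> bool" where
  "mixed_profile n ms \<sigma> \<longleftrightarrow> (\<forall>i\<in>{1..n}. mixed_strategy ms i (\<sigma> i))
      \<and> (\<forall>i. i \<notin> {1..n} \<longrightarrow> \<sigma> i = (\<lambda>_. 0))"

definition exp_payoff :: "nat \<Rightarrow> (nat \<Rightarrow> nat) \<Rightarrow> game \<Rightarrow> profile \<Rightarrow> nat \<Rightarrow> real" where
  "exp_payoff n ms G \<sigma> i = (\<Sum>s\<in>positions n ms. (\<Prod>k\<in>{1..n}. \<sigma> k (s k)) * G s i)"

definition nash :: "nat \<Rightarrow> (nat \<Rightarrow> nat) \<Rightarrow> game \<Rightarrow> profile \<Rightarrow> bool" where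
  "nash n ms G \<sigma> \<longleftrightarrow> mixed_profile n ms \<sigma> \<and>
     (\<forall>i\<in>{1..n}. \<forall>\<tau>. mixed_strategy ms i \<tau> \<longrightarrow>
         exp_payoff n ms G (\<sigma>(i := \<tau>)) i \<le> exp_payoff n ms G \<sigma> i)"

definition NME :: "nat \<Rightarrow> (nat \<Rightarrow> nat) \<Rightarrow> mgame \<Rightarrow> profile set" where
  "NME n ms mg = {\<sigma>. mixed_profile n ms \<sigma> \<and>
      (\<forall>i\<in>{1..n}. \<exists>\<sigma>'. nash n ms (mg i) \<sigma>' \<and> \<sigma>' i = \<sigma> i)}"

definition chi :: "nat \<Rightarrow> profile \<Rightarrow> (nat \<Rightarrow> nat) set" where
  "chi n \<sigma> = PiE {1..n} (\<lambda>i. {a. 0 < \<sigma> i a})"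

definition adapt :: "nat \<Rightarrow> mgame \<Rightarrow> (nat \<Rightarrow> nat) \<Rightarrow> mgame" where
  "adapt n mg v = (\<lambda>g s i. if g \<in> {1..n} \<and> s = v \<and> i \<in> {1..n} then mg 0 v i else mg g s i)"

definition AD :: "nat \<Rightarrow> (nat \<Rightarrow> nat) \<Rightarrow> mgame set \<Rightarrow> mgame set" where
  "AD n ms M = {adapt n mg u | mg \<sigma> u. mg \<in> M \<and> \<sigma> \<in> NME n ms mg \<and> u \<in> chi n \<sigma>}"

definition AD_iter :: "nat \<Rightarrow> (nat \<Rightarrow> nat) \<Rightarrow> nat \<Rightarrow> mgame set \<Rightarrow> mgame set" where
  "AD_iter n ms t M = (AD n ms ^^ t) M"

definition AD_star :: "nat \<Rightarrow> (nat \<Rightarrow> nat) \<Rightarrow> mgame set \<Rightarrow> mgame set" where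
  "AD_star n ms M = (\<Union>t. AD_iter n ms t M)"

definition AD_length :: "nat \<Rightarrow> (nat \<Rightarrow> nat) \<Rightarrow> mgame set \<Rightarrow> nat" where
  "AD_length n ms M = (LEAST t. AD_iter n ms (Suc t) M = AD_iter n ms t M)"

definition AD_inf :: "nat \<Rightarrow> (nat \<Rightarrow> nat) \<Rightarrow> mgame set \<Rightarrow> mgame set" where
  "AD_inf n ms M = AD_iter n ms (AD_length n ms M) M"

definition terminal_set :: "nat \<Rightarrow> (nat \<Rightarrow> nat) \<Rightarrow> mgame \<Rightarrow> mgame set" where
  "terminal_set n ms mg0 = {mg \<in> AD_star n ms {mg0}. mg \<in> AD n ms {mg}}"

definition SME :: "nat \<Rightarrow> (nat \<Rightarrow> nat) \<Rightarrow> mgame \<Rightarrow> profile set" where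
  "SME n ms mg0 = {\<sigma>. \<exists>mgh \<in> AD_inf n ms {mg0}. \<sigma> \<in> NME n ms mgh \<and>
       (\<forall>v\<in>chi n \<sigma>. adapt n mgh v = mgh)}"

definition canonical :: "nat \<Rightarrow> (nat \<Rightarrow> nat) \<Rightarrow> bool" where
  "canonical n ms \<longleftrightarrow> 1 \<le> n \<and> (\<forall>i\<in>{1..n}. 1 \<le> ms i) \<and> (\<forall>i\<in>{1..n}. \<forall>j\<in>{1..n}. ms i = ms j)"

end

theory Submission
  imports Defs
begin

(* Adapting a game only removes discrepancies between the subjective games and the actual
   game, and removes at least one unless it leaves the game unchanged.  So a chain of
   adaptations from mG^(0) longer than its number of discrepancies contains a game adapting
   to itself, and repeating that step shows AD^t({mG^(0)}) \<subseteq> AD^(t+1)({mG^(0)}) for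
   large t.  The reachable games all arise by adapting mG^(0) on some set of positions, so
   they are finitely many and the iterates become stationary.  A terminal game adapts to
   itself and hence persists into AD^infinity; conversely the game witnessing a stable
   misinformed equilibrium adapts to itself at any point of the nonempty support. *)

lemma AD_mono: "M \<subseteq> M' \<Longrightarrow> AD n ms M \<subseteq> AD n ms M'"
  unfolding AD_def by blast

lemma AD_iter_0 [simp]: "AD_iter n ms 0 M = M"
  by (simp add: AD_iter_def)

lemma AD_iter_Suc: "AD_iter n ms (Suc t) M = AD n ms (AD_iter n ms t M)"
  by (simp add: AD_iter_def)

lemma AD_iter_subset_AD_star: "AD_iter n ms t M \<subseteq> AD_star n ms M"
  unfolding AD_star_def by blast

lemma self_adapting_in_AD:
  assumes "mg \<in> AD n ms {mg}" "mg \<in> M"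
  shows "mg \<in> AD n ms M"
  using assms AD_mono[of "{mg}" M] by blast

lemma self_adapting_in_AD_iter:
  assumes "mg \<in> AD n ms {mg}" "mg \<in> AD_iter n ms t M"
  shows "mg \<in> AD_iter n ms (t + k) M"
  by (induction k) (use assms self_adapting_in_AD in \<open>auto simp: AD_iter_Suc\<close>)

lemma chi_subset_positions:
  assumes "mixed_profile n ms \<sigma>"
  shows "chi n \<sigma> \<subseteq> positions n ms"
proof -
  have "a < ms i" if "i \<in> {1..n}" "0 < \<sigma> i a" for i a
    using assms that unfolding mixed_profile_def mixed_strategy_def
    by (metis less_irrefl not_less)
  then show ?thesis unfolding chi_def positions_def by (auto simp: PiE_def Pi_def)
qed

lemma chi_nonempty:
  assumes "mixed_profile n ms \<sigma>"
  shows "chi n \<sigma> \<noteq> {}"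
proof -
  have "\<exists>a. 0 < \<sigma> i a" if i: "i \<in> {1..n}" for i
  proof (rule ccontr)
    assume "\<nexists>a. 0 < \<sigma> i a"
    moreover have "mixed_strategy ms i (\<sigma> i)" using assms i unfolding mixed_profile_def by blast
    ultimately have "\<sigma> i = (\<lambda>_. 0)" and "(\<Sum>a<ms i. \<sigma> i a) = 1"
      unfolding mixed_strategy_def by (auto intro: order_antisym simp: not_less)
    then show False by simp
  qed
  then show ?thesis unfolding chi_def PiE_eq_empty_iff by blast
qed

definition discrepancies :: "nat \<Rightarrow> (nat \<Rightarrow> nat) \<Rightarrow> mgame \<Rightarrow> (nat \<times> (nat \<Rightarrow> nat) \<times> nat) set"
  where "discrepancies n ms mg =
    {(g, s, i). g \<in> {1..n} \<and> s \<in> positions n ms \<and> i \<in> {1..n} \<and> mg g s i \<noteq> mg 0 s i}"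

lemma finite_positions: "finite (positions n ms)"
  unfolding positions_def by (intro finite_PiE) auto

lemma finite_discrepancies: "finite (discrepancies n ms mg)"
proof (rule finite_subset)
  show "discrepancies n ms mg \<subseteq> {1..n} \<times> positions n ms \<times> {1..n}"
    unfolding discrepancies_def by auto
qed (simp add: finite_positions)

lemma discrepancies_adapt_psubset:
  assumes "u \<in> positions n ms" "adapt n mg u \<noteq> mg"
  shows "discrepancies n ms (adapt n mg u) \<subset> discrepancies n ms mg"
proof
  show "discrepancies n ms (adapt n mg u) \<subseteq> discrepancies n ms mg"
    unfolding discrepancies_def by (auto simp: adapt_def)
  obtain g s i where changed: "adapt n mg u g s i \<noteq> mg g s i"
    using assms(2) by (meson ext)
  then have gsi: "g \<in> {1..n}" "s = u" "i \<in> {1..n}"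
    by (auto simp: adapt_def split: if_splits)
  with changed assms(1) have "(g, u, i) \<in> discrepancies n ms mg"
    by (simp add: discrepancies_def adapt_def)
  moreover have "(g, u, i) \<notin> discrepancies n ms (adapt n mg u)"
    using gsi by (simp add: discrepancies_def adapt_def)
  ultimately show "discrepancies n ms (adapt n mg u) \<noteq> discrepancies n ms mg"
    by blast
qed

lemma AD_iter_card_bound_or_persists:
  assumes "mg \<in> AD_iter n ms t {mg0}"
  shows "card (discrepancies n ms mg) + t \<le> card (discrepancies n ms mg0)
         \<or> mg \<in> AD_iter n ms (Suc t) {mg0}"
  using assms
proof (induction t arbitrary: mg)
  case 0
  then show ?case by simp
next
  case (Suc t)
  then obtain h \<sigma> u where h: "h \<in> AD_iter n ms t {mg0}" "\<sigma> \<in> NME n ms h" "u \<in> chi n \<sigma>"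
    and mg: "mg = adapt n h u"
    by (auto simp: AD_iter_Suc AD_def)
  have u: "u \<in> positions n ms"
    using h(2,3) chi_subset_positions by (fastforce simp: NME_def)
  show ?case
  proof (cases "mg = h")
    case True
    then have "mg \<in> AD n ms {mg}" using h(2,3) mg unfolding AD_def by blast
    with Suc.prems show ?thesis by (simp add: AD_iter_Suc self_adapting_in_AD)
  next
    case False
    then have "card (discrepancies n ms mg) < card (discrepancies n ms h)"
      using discrepancies_adapt_psubset[OF u] mg by (simp add: finite_discrepancies psubset_card_mono)
    moreover have "mg \<in> AD n ms (AD_iter n ms (Suc t) {mg0})" if "h \<in> AD_iter n ms (Suc t) {mg0}"
      using that h(2,3) mg unfolding AD_def by blast
    ultimately show ?thesis using Suc.IH[OF h(1)] by (auto simp: AD_iter_Suc)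
  qed
qed

lemma AD_iter_eventually_increasing:
  assumes "card (discrepancies n ms mg0) < t"
  shows "AD_iter n ms t {mg0} \<subseteq> AD_iter n ms (Suc t) {mg0}"
  using AD_iter_card_bound_or_persists assms by fastforce

definition adapt_on :: "nat \<Rightarrow> mgame \<Rightarrow> (nat \<Rightarrow> nat) set \<Rightarrow> mgame" where
  "adapt_on n mg A =
    (\<lambda>g s i. if g \<in> {1..n} \<and> s \<in> A \<and> i \<in> {1..n} then mg 0 s i else mg g s i)"

lemma adapt_adapt_on: "adapt n (adapt_on n mg A) u = adapt_on n mg (insert u A)"
  unfolding adapt_def adapt_on_def by (intro ext) auto

lemma AD_iter_subset_adapt_on:
  "AD_iter n ms t {mg0} \<subseteq> adapt_on n mg0 ` Pow (positions n ms)"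
proof (induction t)
  case 0
  have "mg0 = adapt_on n mg0 {}" unfolding adapt_on_def by simp
  then show ?case by auto
next
  case (Suc t)
  show ?case
  proof
    fix mg assume "mg \<in> AD_iter n ms (Suc t) {mg0}"
    then obtain A \<sigma> u where "A \<subseteq> positions n ms" "\<sigma> \<in> NME n ms (adapt_on n mg0 A)"
        "u \<in> chi n \<sigma>" "mg = adapt n (adapt_on n mg0 A) u"
      using Suc.IH by (auto simp: AD_iter_Suc AD_def)
    moreover have "u \<in> positions n ms"
      using calculation(2,3) chi_subset_positions by (fastforce simp: NME_def)
    ultimately show "mg \<in> adapt_on n mg0 ` Pow (positions n ms)"
      by (auto simp: adapt_adapt_on)
  qed
qed

lemma eventually_increasing_chain_stabilises:
  fixes f :: "nat \<Rightarrow> 'a set"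
  assumes incr: "\<And>t. D < t \<Longrightarrow> f t \<subseteq> f (Suc t)"
    and bounded: "\<And>t. f t \<subseteq> F" and "finite F"
  shows "\<exists>t. f (Suc t) = f t"
proof (rule ccontr)
  assume "\<nexists>t. f (Suc t) = f t"
  with incr have "strict_mono (\<lambda>k. f (Suc D + k))"
    by (intro strict_mono_Suc_iff[THEN iffD2]) (auto simp: psubset_eq)
  then have "inj (\<lambda>k. f (Suc D + k))" by (rule strict_mono_imp_inj_on)
  moreover have "finite (range (\<lambda>k. f (Suc D + k)))"
    using bounded \<open>finite F\<close> by (meson finite_Pow_iff image_subsetI PowI finite_subset)
  ultimately show False by (simp add: finite_image_iff)
qed

lemma AD_iter_stabilises: "\<exists>t. AD_iter n ms (Suc t) {mg0} = AD_iter n ms t {mg0}"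
  using eventually_increasing_chain_stabilises[where f = "\<lambda>t. AD_iter n ms t {mg0}"
      and D = "card (discrepancies n ms mg0)" and F = "adapt_on n mg0 ` Pow (positions n ms)"]
  by (simp add: AD_iter_eventually_increasing AD_iter_subset_adapt_on finite_positions)

lemma AD_iter_eq_AD_inf:
  assumes "\<exists>t. AD_iter n ms (Suc t) M = AD_iter n ms t M" "AD_length n ms M \<le> t"
  shows "AD_iter n ms t M = AD_inf n ms M"
  using assms(2)
proof (induction t rule: dec_induct)
  case base
  then show ?case by (simp add: AD_inf_def)
next
  case (step t)
  have "AD_iter n ms (Suc (AD_length n ms M)) M = AD_iter n ms (AD_length n ms M) M"
    unfolding AD_length_def using assms(1) by (rule LeastI_ex)
  with step show ?case by (simp add: AD_iter_Suc AD_inf_def)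
qed

lemma terminal_set_subset_AD_inf: "terminal_set n ms mg0 \<subseteq> AD_inf n ms {mg0}"
proof
  fix mg assume "mg \<in> terminal_set n ms mg0"
  then obtain t where "mg \<in> AD_iter n ms t {mg0}" "mg \<in> AD n ms {mg}"
    by (auto simp: terminal_set_def AD_star_def)
  then have "mg \<in> AD_iter n ms (t + AD_length n ms {mg0}) {mg0}"
    by (rule self_adapting_in_AD_iter[rotated])
  then show "mg \<in> AD_inf n ms {mg0}"
    using AD_iter_eq_AD_inf[OF AD_iter_stabilises] by simp
qed

lemma SME_in_terminal_set:
  assumes "\<sigma> \<in> SME n ms mg0"
  shows "\<exists>mg\<in>terminal_set n ms mg0. \<sigma> \<in> NME n ms mg"
proof -
  obtain mg where mg: "mg \<in> AD_inf n ms {mg0}" "\<sigma> \<in> NME n ms mg"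
    and stable: "\<forall>v\<in>chi n \<sigma>. adapt n mg v = mg"
    using assms by (auto simp: SME_def)
  obtain u where u: "u \<in> chi n \<sigma>"
    using chi_nonempty mg(2) by (fastforce simp: NME_def)
  with stable have "mg = adapt n mg u" by simp
  with mg(2) u have "mg \<in> AD n ms {mg}" unfolding AD_def by blast
  moreover have "mg \<in> AD_star n ms {mg0}"
    using mg(1) AD_iter_subset_AD_star unfolding AD_inf_def by blast
  ultimately show ?thesis using mg(2) unfolding terminal_set_def by blast
qed

theorem proposition11:
  fixes n :: nat and ms :: "nat \<Rightarrow> nat" and mg0 :: mgame
  assumes "canonical n ms"
  shows "terminal_set n ms mg0 \<subseteq> AD_inf n ms {mg0} \<and>
         (\<forall>\<sigma>\<in>SME n ms mg0. \<exists>mg\<in>terminal_set n ms mg0. \<sigma> \<in> NME n ms mg)"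
  using terminal_set_subset_AD_inf SME_in_terminal_set by blast

end
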